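(* Let $p,q\ge0$ and $a_0,\dots,a_p,c_1,\dots,c_q\in\mathbb C$. Then there exist $n$ and $\mathbf s\in\mathbb C^n$ such that each $Z_{2i}$ ($i\ge0$) acts on the $YQ(1)$-module $V(\mathbf s)$ by a scalar $\chi_{2i}$, and $\sum_{i\ge0}\chi_{2i}u^{-2i-1}=\frac{a_0u^{-1}+\dots+a_pu^{-2p-1}}{1+c_1u^{-2}+\dots+c_qu^{-2q}}$ as formal power series in $u^{-1}$.
   Context: $YQ(1)$ is the unital superalgebra generated by $T_{i,j}^{(m)}$, $m\ge1$, $i,j\in\{\pm1\}$, of parity $p(i)+p(j)$ ($p(1)=0,p(-1)=1$), with $T_{i,j}(u)=\delta_{ij}+\sum_m T^{(m)}_{i,j}u^{-m}$ and defining relations $(u^2-v^2)[T_{i,j}(u),T_{k,l}(v)](-1)^{p(i)p(k)+p(i)p(l)+p(k)p(l)}=(u+v)(T_{k,j}(u)T_{i,l}(v)-T_{k,j}(v)T_{i,l}(u))-(u-v)(T_{-k,j}(u)T_{-i,l}(v)-T_{k,-j}(v)T_{i,-l}(u))(-1)^{p(k)+p(l)}$ and $T_{i,j}(-u)=T_{-i,-j}(u)$ (brackets are supercommutators). Set $\eta_i=(-\tfrac12)^i(\operatorname{ad}T^{(2)}_{1,1})^i(T^{(1)}_{1,-1})$ and $Z_{2i}=\tfrac12[\eta_0,\eta_{2i}]$; the $Z_{2i}$ are central. Let $U(\mathfrak h_n)$ be the superalgebra generated by odd $\xi_1,\dots,\xi_n$ with $\xi_i\xi_j+\xi_j\xi_i=0$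 ($i\ne j$), $x_i=\xi_i^2$. There is a surjective homomorphism $\varphi_n:YQ(1)\to W^n\subset U(\mathfrak h_n)$ onto the principal finite $W$-algebra of $Q(n)$, $\varphi_n(T^{(k)}_{1,1})=(-1)^k[\Sigma_k]_{even}$, $\varphi_n(T^{(k)}_{-1,1})=(-1)^k[\Sigma_k]_{odd}$, $\Sigma_k=\sum_{i_1<\dots<i_k}\prod_{j=1}^k(x_{i_j}+(-1)^{k-j}\xi_{i_j})$ ($0$ for $k>n$). $V(\mathbf s)$, $\mathbf s\in\mathbb C^n$, is a simple graded $U(\mathfrak h_n)$-module with $x_i$ acting by $s_i$, made into a $YQ(1)$-module via $\varphi_n$. *)

theory Defs
  imports Complex_Main "HOL-Computational_Algebra.Formal_Power_Series"
begin

text \<open>A graded module over U(h_n) (generated by odd xi_1..xi_n, pairwise anticommuting,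
 x_i = xi_i^2) on a carrier subspace M = M0 (+) M1 of a complex vector space (type 'v with
 scalar multiplication sc).  Xi i is the action of xi_i (indices 1..n).  x_i acts by s i.\<close>

definition simple_graded_hmod ::
  "(complex \<Rightarrow> 'v::ab_group_add \<Rightarrow> 'v) \<Rightarrow> 'v set \<Rightarrow> 'v set \<Rightarrow> 'v set \<Rightarrow> nat
    \<Rightarrow> (nat \<Rightarrow> 'v \<Rightarrow> 'v) \<Rightarrow> (nat \<Rightarrow> complex) \<Rightarrow> bool" where
  "simple_graded_hmod sc M M0 M1 n Xi s \<longleftrightarrow>
     vector_space sc \<and> module.subspace sc M0 \<and> module.subspace sc M1 \<and>
     M0 \<inter> M1 = {0} \<and> M = {x + y | x y. x \<in> M0 \<and> y \<in> M1} \<and>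
     (\<forall>i\<in>{1..n}. (\<forall>x\<in>M. \<forall>y\<in>M. Xi i (x + y) = Xi i x + Xi i y) \<and>
                   (\<forall>c. \<forall>x\<in>M. Xi i (sc c x) = sc c (Xi i x)) \<and>
                   Xi i ` M0 \<subseteq> M1 \<and> Xi i ` M1 \<subseteq> M0) \<and>
     (\<forall>i\<in>{1..n}. \<forall>j\<in>{1..n}. i \<noteq> j \<longrightarrow> (\<forall>v\<in>M. Xi i (Xi j v) + Xi j (Xi i v) = 0)) \<and>
     (\<forall>i\<in>{1..n}. \<forall>v\<in>M. Xi i (Xi i v) = sc (s i) v) \<and>
     M \<noteq> {0} \<and>
     (\<forall>W. module.subspace sc W \<and> W \<subseteq> M \<and>
          W = {x + y | x y. x \<in> W \<inter> M0 \<and> y \<in> W \<inter> M1} \<and>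
          (\<forall>i\<in>{1..n}. Xi i ` W \<subseteq> W)
          \<longrightarrow> W = {0} \<or> W = M)"

text \<open>Action of the even part (ev = True) resp. odd part (ev = False) of
 Sigma_k = sum_{i_1<...<i_k} prod_{j=1}^k (x_{i_j} + (-1)^(k-j) xi_{i_j}):
 expand each product choosing the xi-term at the positions in J; the even part
 consists of the terms with card J even.  x_i acts as Xi i o Xi i.\<close>

definition sigma_part ::
  "(complex \<Rightarrow> 'v::ab_group_add \<Rightarrow> 'v) \<Rightarrow> nat \<Rightarrow> (nat \<Rightarrow> 'v \<Rightarrow> 'v) \<Rightarrow> nat \<Rightarrow> bool \<Rightarrow> 'v \<Rightarrow> 'v" where
  "sigma_part sc n Xi k ev = (\<lambda>v.
     \<Sum>I\<in>{I. I \<subseteq> {1..n} \<and> card I = k}.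
       \<Sum>J\<in>{J. J \<subseteq> {1..k} \<and> even (card J) = ev}.
         (let ix = sorted_list_of_set I in
            foldr (\<circ>)
              (map (\<lambda>j. if j \<in> J then (\<lambda>w. sc ((-1) ^ (k - j)) (Xi (ix ! (j - 1)) w))
                        else Xi (ix ! (j - 1)) \<circ> Xi (ix ! (j - 1))) [1..<k+1]) id) v)"

text \<open>Actions via phi_n of T^(k)_{1,1}, T^(k)_{-1,1}, and T^(k)_{1,-1};
 the latter uses T_{i,j}(-u) = T_{-i,-j}(u), i.e. T^(k)_{1,-1} = (-1)^k T^(k)_{-1,1}.\<close>

definition phiT11 where
  "phiT11 sc n Xi k = (\<lambda>v. sc ((-1) ^ k) (sigma_part sc n Xi k True v))"

definition phiTm11 where
  "phiTm11 sc n Xi k = (\<lambda>v. sc ((-1) ^ k) (sigma_part sc n Xi k False v))"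

definition phiT1m1 where
  "phiT1m1 sc n Xi k = (\<lambda>v. sc ((-1) ^ k) (phiTm11 sc n Xi k v))"

text \<open>eta_i = (-1/2)^i (ad T^(2)_{11})^i (T^(1)_{1,-1}); T^(2)_{11} is even, so ad is the
 ordinary commutator.\<close>

definition eta_op where
  "eta_op sc n Xi i = (\<lambda>v. sc ((-1/2) ^ i)
     (((\<lambda>Y w. phiT11 sc n Xi 2 (Y w) - Y (phiT11 sc n Xi 2 w)) ^^ i) (phiT1m1 sc n Xi 1) v))"

text \<open>Z_{2i} = 1/2 [eta_0, eta_{2i}], supercommutator of two odd elements (anticommutator).
 Zop ... i is the action of Z_{2i}.\<close>

definition Zop where
  "Zop sc n Xi i = (\<lambda>v. sc (1/2)
     (eta_op sc n Xi 0 (eta_op sc n Xi (2*i) v) + eta_op sc n Xi (2*i) (eta_op sc n Xi 0 v)))"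

end

theory Submission
  imports Defs "HOL-Computational_Algebra.Polynomial_FPS" "HOL-Computational_Algebra.Fundamental_Theorem_Algebra"
begin

(* On a U(h_n)-module on which x_k acts by s_k, ad T^(2)_11 preserves the span of the odd
   generators: -1/2 [T^(2)_11, sum_k b_k xi_k] = sum_k (L b)_k xi_k for an explicit linear map L.
   Hence eta_i = sum_k (L^i 1)_k xi_k, and Z_2i = 1/2 [eta_0, eta_2i] acts by the scalar
   chi_2i = sum_k s_k (L^2i 1)_k, by the anticommutation relations alone.
   The generating functions sum_m (L^m 1)_k t^m are rational with denominator F(t) + F(-t),
   where F(t) = prod_k (1 + s_k t), and summing them gives
     sum_i chi_2i t^(2i+1) = (odd part of F) / (even part of F),   t = u^-1.
   Since C is algebraically closed, F can be any polynomial with constant term 1, in particular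
   1 + a_0 t + c_1 t^2 + a_1 t^3 + c_2 t^4 + ..., whose odd and even parts are the prescribed
   numerator and denominator. *)

unbundle fps_syntax

lemma sum_greaterThanAtMost_telescope:
  fixes f :: "nat \<Rightarrow> 'a::ab_group_add"
  assumes "m \<le> n"
  shows "(\<Sum>c\<in>{m<..n}. f (c - 1) - f c) = f m - f n"
  using sum_telescope''[OF assms, of "\<lambda>c. - f c"]
  by (simp add: atLeastSucAtMost_greaterThanAtMost)

lemma card_1_subsets: "{I. I \<subseteq> A \<and> card I = 1} = (\<lambda>i. {i}) ` A"
  by (auto simp: card_1_singleton_iff)

lemma card_2_subsets:
  "{I. I \<subseteq> A \<and> card I = 2} = (\<lambda>(a, c). {a, c}) ` {(a, c) \<in> A \<times> A. a < (c::'a::linorder)}"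
proof (intro set_eqI iffI)
  fix I assume "I \<in> {I. I \<subseteq> A \<and> card I = 2}"
  then obtain x y where "I = {x, y}" "x \<noteq> y" "I \<subseteq> A"
    by (auto simp: card_2_iff)
  then obtain a c where "I = {a, c}" "a < c" "a \<in> A" "c \<in> A"
    by (cases x y rule: linorder_cases) (auto simp: insert_commute)
  then show "I \<in> (\<lambda>(a, c). {a, c}) ` {(a, c) \<in> A \<times> A. a < c}"
    by auto
qed auto

lemma inj_on_ordered_doubleton: "inj_on (\<lambda>(a, c). {a, c}) {(a, c) \<in> A \<times> A. a < (c::'a::linorder)}"
  by (auto simp: inj_on_def doubleton_eq_iff)

lemma sum_triangle_swap:
  fixes g :: "nat \<Rightarrow> nat \<Rightarrow> 'a::comm_monoid_add"
  shows "(\<Sum>a\<in>{1..n}. \<Sum>c\<in>{a<..n}. g a c) = (\<Sum>c\<in>{1..n}. \<Sum>a\<in>{1..<c}. g a c)"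
proof -
  have "(\<Sum>a\<in>{1..n}. \<Sum>c\<in>{a<..n}. g a c) = (\<Sum>a\<in>{1..n}. \<Sum>c\<in>{c \<in> {1..n}. a < c}. g a c)"
    by (intro sum.cong) auto
  also have "\<dots> = (\<Sum>c\<in>{1..n}. \<Sum>a\<in>{a \<in> {1..n}. a < c}. g a c)"
    by (rule sum.swap_restrict) auto
  also have "\<dots> = (\<Sum>c\<in>{1..n}. \<Sum>a\<in>{1..<c}. g a c)"
    by (intro sum.cong) auto
  finally show ?thesis .
qed

section \<open>The action of eta_i and Z_2i on a U(h_n)-module\<close>

(* -1/2 [T^(2)_11, sum_k b_k xi_k] = sum_k (ad_coeffs n s b)_k xi_k *)
definition ad_coeffs :: "nat \<Rightarrow> (nat \<Rightarrow> 'a::comm_ring_1) \<Rightarrow> (nat \<Rightarrow> 'a) \<Rightarrow> nat \<Rightarrow> 'a" where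
  "ad_coeffs n s b k = (\<Sum>c\<in>{k<..n}. s c * b c) - (\<Sum>c\<in>{1..<k}. s c * b c)"

definition central_char :: "nat \<Rightarrow> (nat \<Rightarrow> 'a::comm_ring_1) \<Rightarrow> nat \<Rightarrow> 'a" where
  "central_char n s i = (\<Sum>k\<in>{1..n}. s k * (ad_coeffs n s ^^ (2 * i)) (\<lambda>_. 1) k)"

lemma ad_coeffs_cmult: "ad_coeffs n s (\<lambda>k. c * b k) = (\<lambda>k. c * ad_coeffs n s b k)"
  unfolding ad_coeffs_def by (simp add: sum_distrib_left right_diff_distrib mult_ac)

locale hn_module = vector_space sc
  for sc :: "complex \<Rightarrow> 'v::ab_group_add \<Rightarrow> 'v" +
  fixes M :: "'v set" and n :: nat and Xi :: "nat \<Rightarrow> 'v \<Rightarrow> 'v" and s :: "nat \<Rightarrow> complex"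
  assumes subspace_M: "subspace M"
    and Xi_closed: "i \<in> {1..n} \<Longrightarrow> v \<in> M \<Longrightarrow> Xi i v \<in> M"
    and Xi_add: "i \<in> {1..n} \<Longrightarrow> v \<in> M \<Longrightarrow> w \<in> M \<Longrightarrow> Xi i (v + w) = Xi i v + Xi i w"
    and Xi_scale: "i \<in> {1..n} \<Longrightarrow> v \<in> M \<Longrightarrow> Xi i (sc c v) = sc c (Xi i v)"
    and Xi_anticomm: "i \<in> {1..n} \<Longrightarrow> j \<in> {1..n} \<Longrightarrow> i \<noteq> j \<Longrightarrow> v \<in> M \<Longrightarrow>
      Xi i (Xi j v) + Xi j (Xi i v) = 0"
    and Xi_square: "i \<in> {1..n} \<Longrightarrow> v \<in> M \<Longrightarrow> Xi i (Xi i v) = sc (s i) v"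

lemma simple_graded_hmod_imp_hn_module:
  assumes "simple_graded_hmod sc M M0 M1 n Xi s"
  shows "hn_module sc M n Xi s"
proof -
  interpret vector_space sc
    using assms by (simp add: simple_graded_hmod_def)
  have M_eq: "M = {x + y |x y. x \<in> M0 \<and> y \<in> M1}"
    and Xi_add: "\<And>i v w. i \<in> {1..n} \<Longrightarrow> v \<in> M \<Longrightarrow> w \<in> M \<Longrightarrow> Xi i (v + w) = Xi i v + Xi i w"
    and Xi_parity: "\<And>i. i \<in> {1..n} \<Longrightarrow> Xi i ` M0 \<subseteq> M1 \<and> Xi i ` M1 \<subseteq> M0"
    using assms by (simp_all add: simple_graded_hmod_def)
  have "subspace M0" "subspace M1"
    using assms by (simp_all add: simple_graded_hmod_def)
  then have "subspace M"
    unfolding M_eq by (rule subspace_sums)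
  have "Xi i v \<in> M" if i: "i \<in> {1..n}" and "v \<in> M" for i v
  proof -
    obtain x y where "v = x + y" "x \<in> M0" "y \<in> M1"
      using \<open>v \<in> M\<close> M_eq by blast
    moreover have "x \<in> M" "y \<in> M"
      using calculation subspace_0[OF \<open>subspace M0\<close>] subspace_0[OF \<open>subspace M1\<close>] unfolding M_eq
      by force+
    ultimately have "Xi i v = Xi i y + Xi i x"
      using Xi_add[OF i] by (simp add: add.commute)
    moreover have "Xi i y \<in> M0" "Xi i x \<in> M1"
      using Xi_parity[OF i] \<open>x \<in> M0\<close> \<open>y \<in> M1\<close> by auto
    ultimately show ?thesis
      unfolding M_eq by blast
  qed
  with \<open>subspace M\<close> assms show ?thesis
    unfolding simple_graded_hmod_def by unfold_locales auto
qed

context hn_module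
begin

lemma Xi_zero: "i \<in> {1..n} \<Longrightarrow> Xi i 0 = 0"
  using Xi_scale[of i 0 0] subspace_M by (simp add: subspace_0)

lemma Xi_diff: "i \<in> {1..n} \<Longrightarrow> v \<in> M \<Longrightarrow> w \<in> M \<Longrightarrow> Xi i (v - w) = Xi i v - Xi i w"
  using Xi_add[of i v "- w"] Xi_scale[of i w "-1"] subspace_M by (simp add: subspace_neg)

lemma Xi_sum: "i \<in> {1..n} \<Longrightarrow> (\<And>j. j \<in> A \<Longrightarrow> f j \<in> M) \<Longrightarrow> Xi i (\<Sum>j\<in>A. f j) = (\<Sum>j\<in>A. Xi i (f j))"
  by (induction A rule: infinite_finite_induct)
    (auto simp: Xi_add Xi_zero subspace_M subspace_sum)

definition xi_comb :: "(nat \<Rightarrow> complex) \<Rightarrow> 'v \<Rightarrow> 'v" where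
  "xi_comb b v = (\<Sum>k\<in>{1..n}. sc (b k) (Xi k v))"

lemma xi_comb_closed: "v \<in> M \<Longrightarrow> xi_comb b v \<in> M"
  unfolding xi_comb_def by (intro subspace_sum subspace_scale subspace_M Xi_closed)

lemma xi_comb_zero: "xi_comb b 0 = 0"
  unfolding xi_comb_def by (simp add: Xi_zero)

lemma xi_comb_add: "v \<in> M \<Longrightarrow> w \<in> M \<Longrightarrow> xi_comb b (v + w) = xi_comb b v + xi_comb b w"
  unfolding xi_comb_def by (simp add: Xi_add scale_right_distrib sum.distrib)

lemma xi_comb_scale: "v \<in> M \<Longrightarrow> xi_comb b (sc c v) = sc c (xi_comb b v)"
  unfolding xi_comb_def by (simp add: Xi_scale scale_sum_right mult.commute)

lemma xi_comb_diff: "v \<in> M \<Longrightarrow> w \<in> M \<Longrightarrow> xi_comb b (v - w) = xi_comb b v - xi_comb b w"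
  using xi_comb_add[of v "- w"] xi_comb_scale[where v = w and c = "-1"] subspace_M by (simp add: subspace_neg)

lemma xi_comb_sum:
  "(\<And>j. j \<in> A \<Longrightarrow> f j \<in> M) \<Longrightarrow> xi_comb b (\<Sum>j\<in>A. f j) = (\<Sum>j\<in>A. xi_comb b (f j))"
  by (induction A rule: infinite_finite_induct)
    (auto simp: xi_comb_add xi_comb_zero subspace_M subspace_sum)

lemma xi_comb_cmult: "xi_comb (\<lambda>k. c * b k) v = sc c (xi_comb b v)"
  unfolding xi_comb_def by (simp add: scale_sum_right)

lemma Xi_xi_comb_anticomm:
  assumes a: "a \<in> {1..n}" and v: "v \<in> M"
  shows "Xi a (xi_comb b v) + xi_comb b (Xi a v) = sc (2 * b a * s a) v"
proof -
  have "Xi a (xi_comb b v) + xi_comb b (Xi a v) =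
      (\<Sum>k\<in>{1..n}. sc (b k) (Xi a (Xi k v) + Xi k (Xi a v)))"
    unfolding xi_comb_def using a v
    by (simp add: Xi_sum Xi_scale Xi_closed subspace_M subspace_scale sum.distrib scale_right_distrib
        del: atLeastAtMost_iff)
  also have "\<dots> = (\<Sum>k\<in>{1..n}. if k = a then sc (2 * b a * s a) v else 0)"
    using a v Xi_anticomm Xi_square by (intro sum.cong) (auto simp: scale_left_distrib[symmetric])
  also have "\<dots> = sc (2 * b a * s a) v"
    using a by simp
  finally show ?thesis .
qed

lemma xi_comb_anticomm:
  assumes v: "v \<in> M"
  shows "xi_comb b (xi_comb b' v) + xi_comb b' (xi_comb b v) = sc (2 * (\<Sum>k\<in>{1..n}. b k * b' k * s k)) v"
proof -
  have "xi_comb b (xi_comb b' v) + xi_comb b' (xi_comb b v) =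
      (\<Sum>k\<in>{1..n}. sc (b k) (Xi k (xi_comb b' v) + xi_comb b' (Xi k v)))"
    unfolding xi_comb_def[of b] using v
    by (simp add: xi_comb_sum xi_comb_scale Xi_closed subspace_M subspace_scale sum.distrib
        scale_right_distrib del: atLeastAtMost_iff)
  also have "\<dots> = (\<Sum>k\<in>{1..n}. sc (2 * (b k * b' k * s k)) v)"
    using v by (intro sum.cong) (simp_all add: Xi_xi_comb_anticomm mult_ac)
  also have "\<dots> = sc (2 * (\<Sum>k\<in>{1..n}. b k * b' k * s k)) v"
    by (simp add: scale_sum_left sum_distrib_left)
  finally show ?thesis .
qed

lemma phiT1m1_1_eq: "phiT1m1 sc n Xi 1 v = xi_comb (\<lambda>_. 1) v"
proof -
  have "{J. J \<subseteq> {1..1::nat} \<and> even (card J) = False} = {{1}}"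
    by (auto simp: subset_singleton_iff)
  then have "sigma_part sc n Xi 1 False v = (\<Sum>i\<in>{1..n}. Xi i v)"
    unfolding sigma_part_def card_1_subsets by (simp add: sum.reindex)
  then show ?thesis
    by (simp add: phiT1m1_def phiTm11_def xi_comb_def)
qed

lemma phiT11_2_eq:
  assumes v: "v \<in> M"
  shows "phiT11 sc n Xi 2 v = (\<Sum>a\<in>{1..n}. \<Sum>c\<in>{a<..n}. sc (s a * s c) v - Xi a (Xi c v))"
proof -
  have "{J. J \<subseteq> {1..2::nat} \<and> even (card J) = True} = {{}, {1, 2}}"
  proof -
    have "Pow {1..2::nat} = {{}, {1}, {2}, {1, 2}}"
      by (simp add: numeral_2_eq_2 atLeastAtMostSuc_conv Pow_insert insert_commute)
    then have "{J. J \<subseteq> {1..2::nat} \<and> even (card J) = True} = {J \<in> {{}, {1}, {2}, {1, 2}}. even (card J)}"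
      by (simp only: Pow_iff[symmetric] simp_thms)
    also have "\<dots> = {{}, {1, 2}}"
      by (auto simp: Collect_disj_eq)
    finally show ?thesis .
  qed
  \<comment> \<open>for a < c the term J = {} is x_a x_c and the term J = {1, 2} is -xi_a xi_c\<close>
  then have "sigma_part sc n Xi 2 True v =
      (\<Sum>(a, c)\<in>{(a, c) \<in> {1..n} \<times> {1..n}. a < c}. sc (s a * s c) v - Xi a (Xi c v))"
    unfolding sigma_part_def card_2_subsets
    by (subst sum.reindex[OF inj_on_ordered_doubleton], intro sum.cong refl)
      (insert v, clarsimp simp: numeral_2_eq_2 upt_rec, simp add: Xi_square subspace_M subspace_scale)
  moreover have "{(a, c) \<in> {1..n} \<times> {1..n}. a < c} = Sigma {1..n} (\<lambda>a. {a<..n})"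
    by auto
  ultimately show ?thesis
    by (simp add: phiT11_def sum.Sigma)
qed

lemma phiT11_2_closed: "v \<in> M \<Longrightarrow> phiT11 sc n Xi 2 v \<in> M"
  unfolding phiT11_2_eq by (intro subspace_sum subspace_diff subspace_scale subspace_M Xi_closed) auto

lemma commutator_pair_xi_comb:
  assumes a: "a \<in> {1..n}" and c: "c \<in> {1..n}" and v: "v \<in> M"
  shows "(sc (s a * s c) (xi_comb b v) - Xi a (Xi c (xi_comb b v))) -
      xi_comb b (sc (s a * s c) v - Xi a (Xi c v)) =
    sc (2 * b a * s a) (Xi c v) - sc (2 * b c * s c) (Xi a v)"
proof -
  have "xi_comb b (Xi c v) = sc (2 * b c * s c) v - Xi c (xi_comb b v)"
    using Xi_xi_comb_anticomm[OF c v] by (simp add: algebra_simps)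
  then have "Xi a (xi_comb b (Xi c v)) = sc (2 * b c * s c) (Xi a v) - Xi a (Xi c (xi_comb b v))"
    using a c v by (simp add: Xi_diff Xi_scale Xi_closed xi_comb_closed subspace_M subspace_scale)
  moreover have "xi_comb b (Xi a (Xi c v)) = sc (2 * b a * s a) (Xi c v) - Xi a (xi_comb b (Xi c v))"
    using Xi_xi_comb_anticomm[OF a Xi_closed[OF c v]] by (simp add: algebra_simps)
  ultimately show ?thesis
    using a c v by (simp add: xi_comb_diff xi_comb_scale Xi_closed subspace_M subspace_scale)
qed

lemma commutator_phiT11_2_xi_comb:
  assumes v: "v \<in> M"
  shows "phiT11 sc n Xi 2 (xi_comb b v) - xi_comb b (phiT11 sc n Xi 2 v) =
    xi_comb (\<lambda>k. -2 * ad_coeffs n s b k) v"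
proof -
  have term_closed: "sc (s a * s c) v - Xi a (Xi c v) \<in> M" if "a \<in> {1..n}" "c \<in> {1..n}" for a c
    using that v by (intro subspace_diff subspace_scale subspace_M Xi_closed)
  have "xi_comb b (phiT11 sc n Xi 2 v) =
      (\<Sum>a\<in>{1..n}. xi_comb b (\<Sum>c\<in>{a<..n}. sc (s a * s c) v - Xi a (Xi c v)))"
    unfolding phiT11_2_eq[OF v] by (rule xi_comb_sum, rule subspace_sum[OF subspace_M], rule term_closed) auto
  also have "\<dots> = (\<Sum>a\<in>{1..n}. \<Sum>c\<in>{a<..n}. xi_comb b (sc (s a * s c) v - Xi a (Xi c v)))"
    by (intro sum.cong refl xi_comb_sum term_closed) auto
  finally have xi_comb_phiT11: "xi_comb b (phiT11 sc n Xi 2 v) =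
      (\<Sum>a\<in>{1..n}. \<Sum>c\<in>{a<..n}. xi_comb b (sc (s a * s c) v - Xi a (Xi c v)))" .
  have "phiT11 sc n Xi 2 (xi_comb b v) - xi_comb b (phiT11 sc n Xi 2 v) =
     (\<Sum>a\<in>{1..n}. \<Sum>c\<in>{a<..n}. sc (2 * b a * s a) (Xi c v) - sc (2 * b c * s c) (Xi a v))"
    unfolding phiT11_2_eq[OF xi_comb_closed[OF v]] xi_comb_phiT11 sum_subtractf[symmetric]
    by (intro sum.cong refl commutator_pair_xi_comb v) auto
  also have "\<dots> = (\<Sum>k\<in>{1..n}. \<Sum>a\<in>{1..<k}. sc (2 * b a * s a) (Xi k v)) -
      (\<Sum>k\<in>{1..n}. \<Sum>c\<in>{k<..n}. sc (2 * b c * s c) (Xi k v))"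
    by (simp only: sum_subtractf sum_triangle_swap)
  also have "\<dots> = xi_comb (\<lambda>k. -2 * ad_coeffs n s b k) v"
  proof -
    have "(\<Sum>a\<in>A. 2 * b a * s a) = 2 * (\<Sum>a\<in>A. s a * b a)" for A
      by (simp add: sum_distrib_left mult_ac)
    then have "(\<Sum>a\<in>{1..<k}. 2 * b a * s a) - (\<Sum>c\<in>{k<..n}. 2 * b c * s c) = -2 * ad_coeffs n s b k" for k
      by (simp add: ad_coeffs_def right_diff_distrib)
    then show ?thesis
      unfolding xi_comb_def sum_subtractf[symmetric]
      by (simp add: scale_sum_left[symmetric] scale_left_diff_distrib[symmetric])
  qed
  finally show ?thesis .
qed

lemma ad_phiT11_2_funpow:
  "v \<in> M \<Longrightarrow> (((\<lambda>Y w. phiT11 sc n Xi 2 (Y w) - Y (phiT11 sc n Xi 2 w)) ^^ i) (phiT1m1 sc n Xi 1)) v =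
    xi_comb (\<lambda>k. (-2) ^ i * (ad_coeffs n s ^^ i) (\<lambda>_. 1) k) v"
proof (induction i arbitrary: v)
  case 0
  then show ?case
    using phiT1m1_1_eq by simp
next
  case (Suc i)
  then show ?case
    by (simp add: phiT11_2_closed commutator_phiT11_2_xi_comb ad_coeffs_cmult mult.assoc)
qed

lemma eta_op_eq: "v \<in> M \<Longrightarrow> eta_op sc n Xi i v = xi_comb ((ad_coeffs n s ^^ i) (\<lambda>_. 1)) v"
  unfolding eta_op_def ad_phiT11_2_funpow
  by (simp add: xi_comb_cmult[symmetric] mult.assoc[symmetric] power_mult_distrib[symmetric])

lemma Zop_eq: "v \<in> M \<Longrightarrow> Zop sc n Xi i v = sc (central_char n s i) v"
  by (simp add: Zop_def eta_op_eq xi_comb_closed xi_comb_anticomm central_char_def mult_ac)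

end

section \<open>The generating function of the central characters\<close>

lemma fps_nth_even_eq_0_of_mult:
  fixes f g h :: "'a::idom fps"
  assumes "f * g = h" and "g $ 0 \<noteq> 0"
    and "\<And>k. odd k \<Longrightarrow> g $ k = 0" and "\<And>k. even k \<Longrightarrow> h $ k = 0"
  shows "even k \<Longrightarrow> f $ k = 0"
proof (induction k rule: less_induct)
  case (less k)
  have "(\<Sum>i\<in>{0..<k}. f $ i * g $ (k - i)) = 0"
  proof (intro sum.neutral ballI)
    fix i assume "i \<in> {0..<k}"
    then show "f $ i * g $ (k - i) = 0"
      using less assms(3)[of "k - i"] by (cases "even i") auto
  qed
  moreover have "{0..k} = insert k {0..<k}"
    by auto
  ultimately have "f $ k * g $ 0 = h $ k"
    by (simp add: assms(1)[symmetric] fps_mult_nth)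
  then show ?case
    using less.prems assms(2,4) by simp
qed

lemma fps_prod_nth_0: "(\<Prod>j\<in>J. f j) $ 0 = (\<Prod>j\<in>J. f j $ 0 :: 'a::comm_ring_1)"
  by (induction J rule: infinite_finite_induct) simp_all

definition flip_prod :: "nat \<Rightarrow> (nat \<Rightarrow> 'a::comm_ring_1) \<Rightarrow> nat \<Rightarrow> 'a fps" where
  "flip_prod n s i =
     (\<Prod>j\<in>{1..i}. 1 - fps_const (s j) * fps_X) * (\<Prod>j\<in>{i<..n}. 1 + fps_const (s j) * fps_X)"

definition omit_prod :: "nat \<Rightarrow> (nat \<Rightarrow> 'a::comm_ring_1) \<Rightarrow> nat \<Rightarrow> 'a fps" where
  "omit_prod n s k =
     (\<Prod>j\<in>{1..<k}. 1 - fps_const (s j) * fps_X) * (\<Prod>j\<in>{k<..n}. 1 + fps_const (s j) * fps_X)"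

lemma flip_prod_0: "flip_prod n s 0 = (\<Prod>j\<in>{1..n}. 1 + fps_const (s j) * fps_X)"
  by (simp add: flip_prod_def atLeastSucAtMost_greaterThanAtMost[symmetric])

lemma flip_prod_n_eq_compose:
  fixes s :: "nat \<Rightarrow> 'a::idom"
  shows "flip_prod n s n = flip_prod n s 0 oo - fps_X"
proof -
  have "(1 + fps_const c * fps_X) oo - fps_X = 1 - fps_const c * fps_X" for c :: 'a
    by (simp add: fps_compose_add_distrib fps_compose_mult_distrib)
  then show ?thesis
    by (simp add: flip_prod_0 fps_compose_prod_distrib) (simp add: flip_prod_def)
qed

lemma flip_prod_pred_eq_omit_prod:
  assumes "k \<in> {1..n}"
  shows "flip_prod n s (k - 1) = (1 + fps_const (s k) * fps_X) * omit_prod n s k"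
proof -
  have "{1..k - 1} = {1..<k}" "{k - 1<..n} = insert k {k<..n}"
    using assms by auto
  then show ?thesis
    unfolding flip_prod_def omit_prod_def by (simp add: mult_ac)
qed

lemma flip_prod_eq_omit_prod:
  assumes "k \<in> {1..n}"
  shows "flip_prod n s k = (1 - fps_const (s k) * fps_X) * omit_prod n s k"
proof -
  have "{1..k} = insert k {1..<k}"
    using assms by auto
  then show ?thesis
    unfolding flip_prod_def omit_prod_def by (simp add: mult_ac)
qed

lemma flip_prod_nth_0: "flip_prod n s i $ 0 = 1"
  by (simp add: flip_prod_def fps_prod_nth_0)

(* The closed form of sum_m ((ad_coeffs n s ^^ m) 1)_k t^m, see ad_coeffs_gf_nth. *)
definition ad_coeffs_gf :: "nat \<Rightarrow> (nat \<Rightarrow> 'a::field) \<Rightarrow> nat \<Rightarrow> 'a fps" where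
  "ad_coeffs_gf n s k = 2 * omit_prod n s k * inverse (flip_prod n s 0 + flip_prod n s n)"

definition central_char_gf :: "nat \<Rightarrow> (nat \<Rightarrow> 'a::field) \<Rightarrow> 'a fps" where
  "central_char_gf n s = fps_X * (\<Sum>k\<in>{1..n}. fps_const (s k) * ad_coeffs_gf n s k)"

context
  fixes n :: nat and s :: "nat \<Rightarrow> 'a::field_char_0"
begin

private abbreviation "E \<equiv> flip_prod n s 0 + flip_prod n s n"

lemma flip_prod_sum_inverse: "E * inverse E = 1"
  by (rule inverse_mult_eq_1') (simp add: flip_prod_nth_0)

lemma X_mult_ad_coeffs_gf:
  assumes "k \<in> {1..n}"
  shows "fps_X * (fps_const (s k) * ad_coeffs_gf n s k) =
    (flip_prod n s (k - 1) - flip_prod n s k) * inverse E"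
  unfolding flip_prod_pred_eq_omit_prod[OF assms] flip_prod_eq_omit_prod[OF assms] ad_coeffs_gf_def by (simp add: algebra_simps)

lemma ad_coeffs_gf_rec:
  assumes k: "k \<in> {1..n}"
  shows "ad_coeffs_gf n s k = 1 + fps_X *
    ((\<Sum>c\<in>{k<..n}. fps_const (s c) * ad_coeffs_gf n s c) -
     (\<Sum>c\<in>{1..<k}. fps_const (s c) * ad_coeffs_gf n s c))"
proof -
  have X_mult_sum: "fps_X * (\<Sum>c\<in>{l<..m}. fps_const (s c) * ad_coeffs_gf n s c) =
      (flip_prod n s l - flip_prod n s m) * inverse E" if "l \<le> m" "m \<le> n" for l m
  proof -
    have "fps_X * (\<Sum>c\<in>{l<..m}. fps_const (s c) * ad_coeffs_gf n s c) =
        (\<Sum>c\<in>{l<..m}. flip_prod n s (c - 1) - flip_prod n s c) * inverse E"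
      unfolding sum_distrib_left sum_distrib_right
      by (intro sum.cong refl X_mult_ad_coeffs_gf) (use that in auto)
    also have "(\<Sum>c\<in>{l<..m}. flip_prod n s (c - 1) - flip_prod n s c) = flip_prod n s l - flip_prod n s m"
      using \<open>l \<le> m\<close> by (rule sum_greaterThanAtMost_telescope)
    finally show ?thesis .
  qed
  have "{1..<k} = {0<..k - 1}" "k - 1 \<le> n"
    using k by auto
  then have lower: "fps_X * (\<Sum>c\<in>{1..<k}. fps_const (s c) * ad_coeffs_gf n s c) =
      (flip_prod n s 0 - flip_prod n s (k - 1)) * inverse E"
    using X_mult_sum[of 0 "k - 1"] by simp
  have upper: "fps_X * (\<Sum>c\<in>{k<..n}. fps_const (s c) * ad_coeffs_gf n s c) =
      (flip_prod n s k - flip_prod n s n) * inverse E"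
    using k by (intro X_mult_sum) auto
  have "1 + fps_X *
    ((\<Sum>c\<in>{k<..n}. fps_const (s c) * ad_coeffs_gf n s c) -
     (\<Sum>c\<in>{1..<k}. fps_const (s c) * ad_coeffs_gf n s c)) =
      E * inverse E + (flip_prod n s k - flip_prod n s n) * inverse E -
        (flip_prod n s 0 - flip_prod n s (k - 1)) * inverse E"
    by (simp only: right_diff_distrib lower upper flip_prod_sum_inverse) simp
  also have "\<dots> = (flip_prod n s (k - 1) + flip_prod n s k) * inverse E"
    by (simp add: algebra_simps)
  also have "\<dots> = ad_coeffs_gf n s k"
    unfolding flip_prod_pred_eq_omit_prod[OF k] flip_prod_eq_omit_prod[OF k] ad_coeffs_gf_def by (simp add: algebra_simps)
  finally show ?thesis ..
qed

lemma ad_coeffs_gf_nth: "k \<in> {1..n} \<Longrightarrow> ad_coeffs_gf n s k $ m = (ad_coeffs n s ^^ m) (\<lambda>_. 1) k"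
proof (induction m arbitrary: k)
  case 0
  then show ?case
    by (subst ad_coeffs_gf_rec) simp_all
next
  case (Suc m)
  then have "ad_coeffs_gf n s k $ Suc m =
      (\<Sum>c\<in>{k<..n}. s c * (ad_coeffs n s ^^ m) (\<lambda>_. 1) c) -
      (\<Sum>c\<in>{1..<k}. s c * (ad_coeffs n s ^^ m) (\<lambda>_. 1) c)"
    by (subst ad_coeffs_gf_rec) (auto simp: fps_sum_nth intro!: arg_cong2[where f = minus] sum.cong)
  then show ?case
    by (simp add: ad_coeffs_def[of n s "(ad_coeffs n s ^^ m) (\<lambda>_. 1)" k])
qed

lemma central_char_gf_nth: "central_char_gf n s $ (2 * i + 1) = central_char n s i"
  by (simp add: central_char_gf_def central_char_def fps_sum_nth ad_coeffs_gf_nth)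

lemma central_char_gf_mult: "central_char_gf n s * E = flip_prod n s 0 - flip_prod n s n"
proof -
  have "central_char_gf n s = (\<Sum>k\<in>{1..n}. (flip_prod n s (k - 1) - flip_prod n s k) * inverse E)"
    unfolding central_char_gf_def sum_distrib_left by (intro sum.cong refl X_mult_ad_coeffs_gf)
  also have "\<dots> = (\<Sum>k\<in>{0<..n}. flip_prod n s (k - 1) - flip_prod n s k) * inverse E"
    by (simp add: sum_distrib_right atLeastSucAtMost_greaterThanAtMost[symmetric])
  also have "\<dots> = (flip_prod n s 0 - flip_prod n s n) * inverse E"
    by (simp only: sum_greaterThanAtMost_telescope[OF le0])
  finally show ?thesis
    using flip_prod_sum_inverse by (simp add: mult.assoc mult.commute[of "inverse E"])
qed

lemma central_char_gf_mult_even_part: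
  defines "F \<equiv> \<Prod>j\<in>{1..n}. 1 + fps_const (s j) * fps_X"
  shows "central_char_gf n s * Abs_fps (\<lambda>k. if even k then F $ k else 0) =
    Abs_fps (\<lambda>k. if odd k then F $ k else 0)"
proof -
  have alternating: "flip_prod n s n $ k = (-1) ^ k * F $ k" for k
    by (simp add: flip_prod_n_eq_compose flip_prod_0 F_def fps_compose_uminus')
  have "E = fps_const 2 * Abs_fps (\<lambda>k. if even k then F $ k else 0)"
    by (rule fps_ext) (auto simp: alternating flip_prod_0 F_def)
  moreover have "flip_prod n s 0 - flip_prod n s n =
      fps_const 2 * Abs_fps (\<lambda>k. if odd k then F $ k else 0)"
    by (rule fps_ext) (auto simp: alternating flip_prod_0 F_def)
  ultimately show ?thesis
    using central_char_gf_mult by (simp add: mult.left_commute)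
qed

lemma central_char_fps_mult_even_part:
  defines "F \<equiv> \<Prod>j\<in>{1..n}. 1 + fps_const (s j) * fps_X"
  shows "Abs_fps (\<lambda>k. if odd k then central_char n s (k div 2) else 0) *
      Abs_fps (\<lambda>k. if even k then F $ k else 0) =
    Abs_fps (\<lambda>k. if odd k then F $ k else 0)"
proof -
  have "central_char_gf n s $ k = 0" if "even k" for k
    by (rule fps_nth_even_eq_0_of_mult[OF central_char_gf_mult_even_part _ _ _ that])
      (simp_all add: F_def fps_prod_nth_0)
  moreover have "central_char_gf n s $ k = central_char n s (k div 2)" if "odd k" for k
    using central_char_gf_nth[of "k div 2"] that by simp
  ultimately have "central_char_gf n s = Abs_fps (\<lambda>k. if odd k then central_char n s (k div 2) else 0)"
    by (intro fps_ext) simp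
  then show ?thesis
    using central_char_gf_mult_even_part unfolding F_def by simp
qed

end

section \<open>Polynomials with constant term one\<close>

lemma poly_eq_prod_one_plus_linear:
  fixes P :: "'a::alg_closed_field poly"
  assumes "poly P 0 = 1"
  shows "\<exists>(n::nat) s. P = (\<Prod>j\<in>{1..n}. [:1, s j:])"
  using assms
proof (induction "degree P" arbitrary: P rule: less_induct)
  case (less P)
  show ?case
  proof (cases "degree P = 0")
    case True
    then have "P = 1"
      using less.prems by (auto elim!: degree_eq_zeroE)
    then show ?thesis
      by (intro exI[of _ 0] exI[of _ "\<lambda>_. 0"]) simp
  next
    case False
    then obtain z where "poly P z = 0"
      using alg_closed_imp_poly_has_root by blast
    then obtain Q where P_eq: "P = [:-z, 1:] * Q"
      using poly_eq_0_iff_dvd by (metis dvdE)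
    have zQ: "- z * poly Q 0 = 1"
      using less.prems by (simp add: P_eq)
    then have "z \<noteq> 0" "Q \<noteq> 0"
      by auto
    define Q' where "Q' = smult (-z) Q"
    have P_eq': "P = [:1, -1/z:] * Q'"
      using \<open>z \<noteq> 0\<close> by (simp add: P_eq Q'_def mult_smult_right[symmetric] del: mult_smult_right)
    have "degree P = degree Q + 1"
      unfolding P_eq using \<open>Q \<noteq> 0\<close> by (subst degree_mult_eq) auto
    then have "degree Q' < degree P"
      using \<open>z \<noteq> 0\<close> by (simp add: Q'_def)
    moreover have "poly Q' 0 = 1"
      using zQ by (simp add: Q'_def)
    ultimately obtain m :: nat and s where Q'_eq: "Q' = (\<Prod>j\<in>{1..m}. [:1, s j:])"
      using less.hyps by blast
    define s' where "s' = s(Suc m := -1/z)"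
    have "(\<Prod>j\<in>{1..m}. [:1, s' j:]) = Q'"
      unfolding Q'_eq s'_def by (rule prod.cong) auto
    then have "P = (\<Prod>j\<in>{1..Suc m}. [:1, s' j:])"
      by (simp add: P_eq' s'_def mult.commute)
    then show ?thesis
      by blast
  qed
qed

lemma fps_eq_prod_one_plus_linear:
  fixes e :: "nat \<Rightarrow> 'a::alg_closed_field"
  assumes "e 0 = 1" and "\<And>k. k > N \<Longrightarrow> e k = 0"
  shows "\<exists>(n::nat) s. \<forall>k. (\<Prod>j\<in>{1..n}. 1 + fps_const (s j) * fps_X) $ k = e k"
proof -
  have coeff_e: "coeff (Abs_poly e) = e"
    using assms(2) by (rule coeff_Abs_poly)
  then obtain n :: nat and s where "Abs_poly e = (\<Prod>j\<in>{1..n}. [:1, s j:])"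
    using poly_eq_prod_one_plus_linear[of "Abs_poly e"] assms(1) by (auto simp: poly_0_coeff_0)
  then have "(\<Prod>j\<in>{1..n}. 1 + fps_const (s j) * fps_X) = fps_of_poly (Abs_poly e)"
    by (simp add: fps_of_poly_prod fps_of_poly_pCons)
  then have "\<forall>k. (\<Prod>j\<in>{1..n}. 1 + fps_const (s j) * fps_X) $ k = e k"
    using coeff_e by simp
  then show ?thesis
    by blast
qed

theorem proposition5p7:
  fixes p q :: nat and a c :: "nat \<Rightarrow> complex"
  shows "\<exists>(n::nat) (s::nat \<Rightarrow> complex) (\<chi>::nat \<Rightarrow> complex).
     (\<forall>(sc::complex \<Rightarrow> 'v::ab_group_add \<Rightarrow> 'v) M M0 M1 Xi.
        simple_graded_hmod sc M M0 M1 n Xi s \<longrightarrow>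
        (\<forall>i. \<forall>v\<in>M. Zop sc n Xi i v = sc (\<chi> i) v)) \<and>
     Abs_fps (\<lambda>k. if odd k then \<chi> (k div 2) else 0) =
       Abs_fps (\<lambda>k. if odd k \<and> k div 2 \<le> p then a (k div 2) else 0) /
       Abs_fps (\<lambda>k. if k = 0 then 1 else if even k \<and> k div 2 \<le> q then c (k div 2) else 0)"
proof -
  define e where "e k = (if k = 0 then 1 else if odd k then if k div 2 \<le> p then a (k div 2) else 0
    else if k div 2 \<le> q then c (k div 2) else 0)" for k
  have "e 0 = 1" and "e k = 0" if "k > 2 * p + 2 * q + 1" for k
    using that by (auto simp: e_def)
  then obtain n :: nat and s where F_nth: "\<And>k. (\<Prod>j\<in>{1..n}. 1 + fps_const (s j) * fps_X) $ k = e k"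
    using fps_eq_prod_one_plus_linear[of e] by blast
  define A where "A = Abs_fps (\<lambda>k. if odd k \<and> k div 2 \<le> p then a (k div 2) else 0)"
  define C where "C = Abs_fps (\<lambda>k. if k = 0 then 1 else if even k \<and> k div 2 \<le> q then c (k div 2) else 0)"
  define H where "H = Abs_fps (\<lambda>k. if odd k then central_char n s (k div 2) else 0)"
  have "C = Abs_fps (\<lambda>k. if even k then e k else 0)" "A = Abs_fps (\<lambda>k. if odd k then e k else 0)"
    by (auto simp: A_def C_def e_def intro!: arg_cong[where f = Abs_fps])
  then have "H * C = A"
    using central_char_fps_mult_even_part[of n s] unfolding F_nth H_def by simp
  moreover have "C \<noteq> 0"
    using fps_nth_Abs_fps[of _ 0] by (auto simp: C_def fps_eq_iff)
  ultimately have "H = A / C"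
    by (metis nonzero_mult_div_cancel_right)
  moreover have "Zop sc n Xi i v = sc (central_char n s i) v"
    if "simple_graded_hmod sc M M0 M1 n Xi s" "v \<in> M" for sc :: "complex \<Rightarrow> 'v::ab_group_add \<Rightarrow> 'v" and M M0 M1 Xi i v
    using hn_module.Zop_eq[OF simple_graded_hmod_imp_hn_module[OF that(1)] that(2)] .
  ultimately show ?thesis
    unfolding A_def C_def H_def by blast
qed

end
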